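(* (i) Let $W$ be a vector space, $c^1(z,w),\dots,c^r(z,w)$ $W$-valued vertex series, and $h_1,\dots,h_r\in\mathbb K$ with $h_i-h_j\notin\mathbb Z$ for $i\ne j$. If $\sum_{i=1}^rc^i(z,w)(z-w)^{h_i}=0$, then $c^i=0$ for all $i$. (ii) Let $c^1(\check z,\check w),\dots,c^r(\check z,\check w)$ be fields on $V$ and $\check h_1,\dots,\check h_r\in\mathbb K^2$ with $\check h_i-\check h_j\notin\mathbb Z^2$ for $i\ne j$. If $\sum_{i=1}^rc^i(\check z,\check w)(\check z-\check w)^{\check h_i}=0$, then $c^i=0$ for all $i$.
   Context: $\mathbb K$ is a field of characteristic $0$. For a vector space $W$, $W\{z,w\}$ denotes formal sums $\sum_{(n,m)\in\mathbb K^2}a_{n,m}z^{-n-1}w^{-m-1}$; a vertex series is an element of the $\mathbb K[z^{\mathbb K},w^{\mathbb K}]$-submodule generated by the power series $W[[z,w]]$ (finite sums of monomials $z^\alpha w^\beta$ times power series). For $h\in\mathbb K$, $(z-w)^h:=\sum_{i\in\mathbb N}(-1)^i\binom hi z^{h-i}w^i$. With $\check z=(z,\bar z)$, $\check w=(w,\bar w)$ and $\check h=(h,\bar h)$: $(\check z-\check w)^{\check h}:=(z-w)^h(\bar z-\bar w)^{\bar h}$. A field on $V$ is an $\mathrm{End}(V)$-valued formal distribution in $\check z,\check w$ (exponents in $\mathbb K$) whose value on every vector of $V$ is a vertex series. *)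

theory Defs
  imports Complex_Main "HOL-Library.Groups_Big_Fun"
begin

text \<open>Formal series are represented by their coefficient functions, indexed by the
exponents: f (a,b) is the coefficient of z^a w^b (a, b in K).  For the 4-variable
series of part (ii) the index is ((a, abar), (b, bbar)) for z^a zbar^abar w^b wbar^bbar.\<close>

text \<open>Monomial z^(fst s) w^(snd s) times the power series sum p(m,n) z^m w^n.\<close>
definition mono_ps2 :: "'k::field_char_0 \<times> 'k \<Rightarrow> (nat \<times> nat \<Rightarrow> 'w::zero) \<Rightarrow> 'k \<times> 'k \<Rightarrow> 'w" where
  "mono_ps2 s p e =
     (if \<exists>m n. e = (fst s + of_nat m, snd s + of_nat n)
      then p (THE mn. e = (fst s + of_nat (fst mn), snd s + of_nat (snd mn)))
      else 0)"

text \<open>Vertex series in (z,w): elements of the K[z^K,w^K]-submodule generated by W[[z,w]],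
i.e. finite sums of monomials times power series.\<close>
definition vertex_series2 :: "('k::field_char_0 \<times> 'k \<Rightarrow> 'w::comm_monoid_add) \<Rightarrow> bool" where
  "vertex_series2 f \<longleftrightarrow>
     (\<exists>S g. finite S \<and> f = (\<lambda>e. \<Sum>s\<in>S. mono_ps2 s (g s) e))"

text \<open>c(z,w) (z-w)^h, with (z-w)^h = sum_i (-1)^i (h choose i) z^(h-i) w^i.\<close>
definition mult_zw_pow :: "('k::field_char_0 \<Rightarrow> 'w::comm_monoid_add \<Rightarrow> 'w) \<Rightarrow> 'k \<Rightarrow>
    ('k \<times> 'k \<Rightarrow> 'w) \<Rightarrow> 'k \<times> 'k \<Rightarrow> 'w" where
  "mult_zw_pow scale h c e =
     Sum_any (\<lambda>i::nat. scale ((-1)^i * (h gchoose i))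
                        (c (fst e - h + of_nat i, snd e - of_nat i)))"

type_synonym 'k exp4 = "('k \<times> 'k) \<times> ('k \<times> 'k)"

definition mono_ps4 :: "'k::field_char_0 exp4 \<Rightarrow> ((nat \<times> nat) \<times> (nat \<times> nat) \<Rightarrow> 'w::zero)
    \<Rightarrow> 'k exp4 \<Rightarrow> 'w" where
  "mono_ps4 s p e =
     (if \<exists>m1 m2 n1 n2. e = ((fst (fst s) + of_nat m1, snd (fst s) + of_nat m2),
                            (fst (snd s) + of_nat n1, snd (snd s) + of_nat n2))
      then p (THE mn. e = ((fst (fst s) + of_nat (fst (fst mn)), snd (fst s) + of_nat (snd (fst mn))),
                          (fst (snd s) + of_nat (fst (snd mn)), snd (snd s) + of_nat (snd (snd mn)))))
      else 0)"

definition vertex_series4 :: "('k::field_char_0 exp4 \<Rightarrow> 'w::comm_monoid_add) \<Rightarrow> bool" where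
  "vertex_series4 f \<longleftrightarrow>
     (\<exists>S g. finite S \<and> f = (\<lambda>e. \<Sum>s\<in>S. mono_ps4 s (g s) e))"

definition is_field :: "('k::field_char_0 \<Rightarrow> 'v::ab_group_add \<Rightarrow> 'v) \<Rightarrow> ('k exp4 \<Rightarrow> 'v \<Rightarrow> 'v) \<Rightarrow> bool" where
  "is_field scale c \<longleftrightarrow>
     (\<forall>e. Vector_Spaces.linear scale scale (c e)) \<and> (\<forall>v. vertex_series4 (\<lambda>e. c e v))"

text \<open>c(zc,wc) (zc-wc)^hc, hc = (h, hbar), applied to a vector v, as a V-valued series.\<close>
definition field_mult_pow :: "('k::field_char_0 \<Rightarrow> 'v::comm_monoid_add \<Rightarrow> 'v) \<Rightarrow> 'k \<times> 'k \<Rightarrow>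
    ('k exp4 \<Rightarrow> 'v \<Rightarrow> 'v) \<Rightarrow> 'v \<Rightarrow> 'k exp4 \<Rightarrow> 'v" where
  "field_mult_pow scale hh c v e =
     Sum_any (\<lambda>(i::nat, j::nat).
        scale ((-1)^(i + j) * (fst hh gchoose i) * (snd hh gchoose j))
          (c ((fst (fst e) - fst hh + of_nat i, snd (fst e) - snd hh + of_nat j),
              (fst (snd e) - of_nat i, snd (snd e) - of_nat j)) v))"

end

theory Submission
  imports Defs
begin

text \<open>Cut every series along the antidiagonal slice through a fixed exponent: the coefficients
  of z^(D-h-m1) zbar^(Dbar-hbar-m2) w^(B+m1) wbar^(Bbar+m2), m in Z^2, form an array a(m), which is
  finitely supported because vertex series have bounded-below exponents in each variable.
  Multiplication by (z-w)^h (zbar-wbar)^hbar becomes convolution of a with the signed binomial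
  coefficients (-1)^j (h choose j), so the hypothesis says that the convolutions of the arrays
  a_i sum to zero.

  The row operator (U a)(m) = (m1 + P) a(m) + (Q - h - m1) a(m1 - 1, m2) is intertwined by the
  convolution with an operator that does not depend on h, so applying it to all a_i preserves the
  relation. Choosing P and Q from the rows occupied by a_r makes U shrink that support, while U
  stays injective on every a_i with h_i - h_r not an integer. Iterating removes a_r from the
  relation, and induction on the number of terms kills those a_i; the same argument in the
  second coordinate kills those with hbar_i - hbar_r not an integer. Finally a single
  convolution is injective, since both binomial sequences start with 1.\<close>

definition signed_gchoose :: "'k::field_char_0 \<Rightarrow> int \<Rightarrow> 'k" where
  "signed_gchoose h j = (if j < 0 then 0 else (-1)^nat j * (h gchoose nat j))"

lemma signed_gchoose_of_nat: "signed_gchoose h (int k) = (-1)^k * (h gchoose k)"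
  by (simp add: signed_gchoose_def)

lemma signed_gchoose_0_left: "signed_gchoose 0 j = (if j = 0 then 1 else 0)"
  by (auto simp: signed_gchoose_def gbinomial_0_left)

lemma signed_gchoose_rec:
  "of_int j * signed_gchoose h j = (of_int j - 1 - h) * signed_gchoose h (j - 1)"
proof (cases "j \<le> 0")
  case True
  then show ?thesis
    by (cases "j = 0") (auto simp: signed_gchoose_def)
next
  case False
  then obtain k where k: "j = int (Suc k)"
    by (metis gr0_implies_Suc not_le of_nat_0_less_iff zero_less_imp_eq_int)
  have absorb: "of_nat (Suc k) * (h gchoose Suc k) = (h - of_nat k) * (h gchoose k)"
    using gbinomial_absorption[of k h] gbinomial_absorb_comp[of h k] by simp
  have "of_int j * signed_gchoose h j = - ((-1)^k * (of_nat (Suc k) * (h gchoose Suc k)))"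
    unfolding k signed_gchoose_of_nat by simp
  also have "\<dots> = (of_int j - 1 - h) * signed_gchoose h (j - 1)"
    unfolding absorb using k by (simp add: signed_gchoose_of_nat algebra_simps)
  finally show ?thesis .
qed

lemma signed_gchoose_shift_coeff:
  "signed_gchoose h (n - m) * (of_int m + P) + signed_gchoose h (n - 1 - m) * (Q - h - of_int m - 1)
   = (of_int n + P) * signed_gchoose h (n - m) + (Q - of_int n) * signed_gchoose h (n - 1 - m)"
  using signed_gchoose_rec[of "n - m" h] by (simp add: algebra_simps)

definition supp :: "('a \<Rightarrow> 'b::zero) \<Rightarrow> 'a set" where
  "supp a = {m. a m \<noteq> 0}"

lemma supp_eq_empty_iff: "supp a = {} \<longleftrightarrow> a = (\<lambda>m. 0)"
  by (auto simp: supp_def)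

definition width :: "(int \<times> int \<Rightarrow> 'w::zero) \<Rightarrow> nat" where
  "width a = (if supp a = {} then 0 else nat (Max (fst ` supp a) - Min (fst ` supp a) + 1))"

lemma width_le:
  assumes "finite (supp a)" "supp a \<subseteq> {m. L \<le> fst m \<and> fst m \<le> U}"
  shows "width a \<le> nat (U - L + 1)"
proof (cases "supp a = {}")
  case False
  have "Max (fst ` supp a) \<le> U" using assms False by (subst Max_le_iff) auto
  moreover have "L \<le> Min (fst ` supp a)" using assms False by (subst Min_ge_iff) auto
  ultimately show ?thesis using False by (simp add: width_def)
qed (simp add: width_def)

lemma Sum_any_reindex_inj:
  assumes "inj f" "\<And>y. y \<notin> range f \<Longrightarrow> g y = (0::'b::comm_monoid_add)"
  shows "Sum_any (g \<circ> f) = Sum_any g"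
proof -
  have supp_g: "{y. g y \<noteq> 0} = f ` {x. g (f x) \<noteq> 0}"
  proof (intro subset_antisym subsetI)
    fix y assume "y \<in> {y. g y \<noteq> 0}"
    moreover from this obtain x where "y = f x" using assms(2) by blast
    ultimately show "y \<in> f ` {x. g (f x) \<noteq> 0}" by blast
  qed auto
  have "Sum_any g = sum g (f ` {x. g (f x) \<noteq> 0})"
    by (simp add: Sum_any.expand_set supp_g)
  also have "\<dots> = sum (g \<circ> f) {x. g (f x) \<noteq> 0}"
    by (rule sum.reindex) (use assms(1) inj_on_subset in blast)
  also have "\<dots> = Sum_any (g \<circ> f)" by (simp add: Sum_any.expand_set)
  finally show ?thesis by simp
qed

definition nat_slice :: "'k::field_char_0 \<Rightarrow> 'k \<Rightarrow> int set" where
  "nat_slice A B = {m. A - of_int m \<in> \<nat> \<and> B + of_int m \<in> \<nat>}"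

lemma finite_nat_slice:
  fixes A B :: "'k::field_char_0"
  shows "finite (nat_slice A B)"
proof (cases "nat_slice A B = {}")
  case False
  then obtain m0 where "m0 \<in> nat_slice A B" by blast
  then obtain N1 N2 where m0: "A - of_int m0 = of_nat N1" "B + of_int m0 = of_nat N2"
    by (auto simp: nat_slice_def elim!: Nats_cases)
  have "nat_slice A B \<subseteq> {m0 - int N2 .. m0 + int N1}"
  proof
    fix m assume "m \<in> nat_slice A B"
    then obtain K1 K2 where m: "A - of_int m = of_nat K1" "B + of_int m = of_nat K2"
      by (auto simp: nat_slice_def elim!: Nats_cases)
    have "(of_int (m0 - m) :: 'k) = of_int (int K1 - int N1)"
      by (simp add: m(1)[symmetric] m0(1)[symmetric])
    moreover have "(of_int (m - m0) :: 'k) = of_int (int K2 - int N2)"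
      by (simp add: m(2)[symmetric] m0(2)[symmetric])
    ultimately show "m \<in> {m0 - int N2 .. m0 + int N1}" unfolding of_int_eq_iff by simp
  qed
  then show ?thesis by (rule finite_subset) simp
qed (metis finite.emptyI)

lemma vertex_series2_slice_finite:
  assumes "vertex_series2 (F :: 'k::field_char_0 \<times> 'k \<Rightarrow> 'w::comm_monoid_add)"
  shows "finite {m::int. F (A - of_int m, B + of_int m) \<noteq> 0}"
proof -
  obtain S g where S: "finite S" "F = (\<lambda>e. \<Sum>s\<in>S. mono_ps2 s (g s) e)"
    using assms unfolding vertex_series2_def by blast
  have "{m::int. F (A - of_int m, B + of_int m) \<noteq> 0} \<subseteq> (\<Union>s\<in>S. nat_slice (A - fst s) (B - snd s))"
  proof
    fix m assume "m \<in> {m::int. F (A - of_int m, B + of_int m) \<noteq> 0}"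
    then have "(\<Sum>s\<in>S. mono_ps2 s (g s) (A - of_int m, B + of_int m)) \<noteq> 0" using S(2) by simp
    then obtain s where s: "s \<in> S" "mono_ps2 s (g s) (A - of_int m, B + of_int m) \<noteq> 0"
      using sum.not_neutral_contains_not_neutral by blast
    then have "A - of_int m - fst s \<in> \<nat>" "B + of_int m - snd s \<in> \<nat>"
      by (auto simp: mono_ps2_def split: if_splits)
    then have "m \<in> nat_slice (A - fst s) (B - snd s)"
      by (simp add: nat_slice_def diff_right_commute diff_add_eq)
    then show "m \<in> (\<Union>s\<in>S. nat_slice (A - fst s) (B - snd s))" using s(1) by blast
  qed
  moreover have "finite (\<Union>s\<in>S. nat_slice (A - fst s) (B - snd s))"
    using S(1) by (intro finite_UN_I finite_nat_slice)
  ultimately show ?thesis by (rule finite_subset)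
qed

lemma vertex_series4_slice_finite:
  assumes "vertex_series4 (F :: 'k::field_char_0 exp4 \<Rightarrow> 'w::comm_monoid_add)"
  shows "finite {m::int \<times> int. F ((A1 - of_int (fst m), A2 - of_int (snd m)),
                                    (B1 + of_int (fst m), B2 + of_int (snd m))) \<noteq> 0}"
    (is "finite {m. F (?e m) \<noteq> 0}")
proof -
  obtain S g where S: "finite S" "F = (\<lambda>e. \<Sum>s\<in>S. mono_ps4 s (g s) e)"
    using assms unfolding vertex_series4_def by blast
  define box where "box s = nat_slice (A1 - fst (fst s)) (B1 - fst (snd s))
                          \<times> nat_slice (A2 - snd (fst s)) (B2 - snd (snd s))" for s :: "'k exp4"
  have "{m. F (?e m) \<noteq> 0} \<subseteq> (\<Union>s\<in>S. box s)"
  proof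
    fix m assume "m \<in> {m. F (?e m) \<noteq> 0}"
    then have "(\<Sum>s\<in>S. mono_ps4 s (g s) (?e m)) \<noteq> 0" using S(2) by simp
    then obtain s where s: "s \<in> S" "mono_ps4 s (g s) (?e m) \<noteq> 0"
      using sum.not_neutral_contains_not_neutral by blast
    then have "A1 - of_int (fst m) - fst (fst s) \<in> \<nat>" "A2 - of_int (snd m) - snd (fst s) \<in> \<nat>"
        "B1 + of_int (fst m) - fst (snd s) \<in> \<nat>" "B2 + of_int (snd m) - snd (snd s) \<in> \<nat>"
      by (auto simp: mono_ps4_def split: if_splits)
    then have "m \<in> box s"
      by (cases m) (simp add: box_def nat_slice_def diff_right_commute diff_add_eq)
    then show "m \<in> (\<Union>s\<in>S. box s)" using s(1) by blast
  qed
  moreover have "finite (\<Union>s\<in>S. box s)"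
    using S(1) by (auto simp: box_def intro!: finite_cartesian_product finite_nat_slice)
  ultimately show ?thesis by (rule finite_subset)
qed

lemma range_int_iff: "y \<in> range int \<longleftrightarrow> 0 \<le> y"
  by (metis nonneg_int_cases of_nat_0_le_iff rangeE rangeI)

context
  fixes sc :: "'k::field_char_0 \<Rightarrow> 'w::ab_group_add \<Rightarrow> 'w"
  assumes vs: "vector_space sc"
begin

interpretation vector_space sc by (rule vs)

text \<open>If a(m) is the coefficient of z^(D-h-m1) zbar^(Dbar-hbar-m2) w^(B+m1) wbar^(Bbar+m2) in a
  series c, then pow_conv h hbar a n is the coefficient of z^(D-n1) zbar^(Dbar-n2) w^(B+n1)
  wbar^(Bbar+n2) in c (z-w)^h (zbar-wbar)^hbar.\<close>
definition pow_conv :: "'k \<Rightarrow> 'k \<Rightarrow> (int \<times> int \<Rightarrow> 'w) \<Rightarrow> int \<times> int \<Rightarrow> 'w" where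
  "pow_conv h hb a n =
     Sum_any (\<lambda>m. sc (signed_gchoose h (fst n - fst m) * signed_gchoose hb (snd n - snd m)) (a m))"

lemma pow_conv_zero [simp]: "pow_conv h hb (\<lambda>m. 0) n = 0"
  by (simp add: pow_conv_def)

lemma finite_supp_scale: "finite (supp a) \<Longrightarrow> finite {m. sc (f m) (a m) \<noteq> 0}"
  by (erule finite_subset[rotated]) (auto simp: supp_def)

lemma scale_Sum_any:
  assumes "finite {m. g m \<noteq> 0}"
  shows "sc c (Sum_any g) = Sum_any (\<lambda>m. sc c (g m))"
proof -
  have "Sum_any (\<lambda>m. sc c (g m)) = sum (\<lambda>m. sc c (g m)) {m. g m \<noteq> 0}"
    by (rule Sum_any.expand_superset) (use assms in auto)
  then show ?thesis by (simp add: Sum_any.expand_set scale_sum_right)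
qed

definition shift_op :: "'k \<Rightarrow> 'k \<Rightarrow> 'k \<Rightarrow> (int \<times> int \<Rightarrow> 'w) \<Rightarrow> int \<times> int \<Rightarrow> 'w" where
  "shift_op P Q h a m = sc (of_int (fst m) + P) (a m) + sc (Q - h - of_int (fst m)) (a (fst m - 1, snd m))"

lemma pow_conv_shift_op:
  assumes fin: "finite (supp a)"
  shows "pow_conv h hb (shift_op P Q h a) n =
     sc (of_int (fst n) + P) (pow_conv h hb a n) + sc (Q - of_int (fst n)) (pow_conv h hb a (fst n - 1, snd n))"
proof -
  define B where "B = (\<lambda>m. signed_gchoose h (fst n - fst m) * signed_gchoose hb (snd n - snd m))"
  define B1 where "B1 = (\<lambda>m. signed_gchoose h (fst n - 1 - fst m) * signed_gchoose hb (snd n - snd m))"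
  define shift where "shift = (\<lambda>m::int\<times>int. (fst m + 1, snd m))"
  have bij: "bij shift" unfolding shift_def
    by (rule o_bij[where g="\<lambda>m. (fst m - 1, snd m)"]) auto
  have fs: "finite {m. sc (f m) (a m) \<noteq> 0}" for f
    by (rule finite_supp_scale[OF fin])
  have fs_shift: "finite {m. sc (f m) (a (fst m - 1, snd m)) \<noteq> 0}" for f
  proof -
    have "{m. sc (f m) (a (fst m - 1, snd m)) \<noteq> 0} \<subseteq> shift ` supp a"
      by (auto simp: supp_def shift_def image_iff) (metis diff_add_cancel)
    then show ?thesis using fin finite_subset by blast
  qed
  have "pow_conv h hb (shift_op P Q h a) n =
     Sum_any (\<lambda>m. sc (B m * (of_int (fst m) + P)) (a m)) +
     Sum_any (\<lambda>m. sc (B m * (Q - h - of_int (fst m))) (a (fst m - 1, snd m)))"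
    unfolding pow_conv_def shift_op_def B_def
    by (simp only: Sum_any.distrib[symmetric, OF fs fs_shift]) (simp add: scale_right_distrib)
  also have "Sum_any (\<lambda>m. sc (B m * (Q - h - of_int (fst m))) (a (fst m - 1, snd m)))
      = Sum_any (\<lambda>m. sc (B1 m * (Q - h - of_int (fst m) - 1)) (a m))"
    by (rule Sum_any.reindex_cong[OF bij]) (auto simp: shift_def B_def B1_def algebra_simps)
  also have "Sum_any (\<lambda>m. sc (B m * (of_int (fst m) + P)) (a m)) + \<dots>
      = Sum_any (\<lambda>m. sc ((of_int (fst n) + P) * B m) (a m)) + Sum_any (\<lambda>m. sc ((Q - of_int (fst n)) * B1 m) (a m))"
  proof -
    have "B m * (of_int (fst m) + P) + B1 m * (Q - h - of_int (fst m) - 1)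
        = (of_int (fst n) + P) * B m + (Q - of_int (fst n)) * B1 m" for m
      using arg_cong[OF signed_gchoose_shift_coeff[of h "fst n" "fst m" P Q],
          of "\<lambda>x. x * signed_gchoose hb (snd n - snd m)"]
      unfolding B_def B1_def by (simp add: algebra_simps)
    then show ?thesis
      by (simp only: Sum_any.distrib[symmetric, OF fs fs] scale_left_distrib[symmetric])
  qed
  also have "\<dots> = sc (of_int (fst n) + P) (pow_conv h hb a n) + sc (Q - of_int (fst n)) (pow_conv h hb a (fst n - 1, snd n))"
    unfolding pow_conv_def B_def B1_def by (simp only: scale_Sum_any[OF fs]) simp
  finally show ?thesis .
qed

definition conv_vanishes :: "'i set \<Rightarrow> ('i \<Rightarrow> 'k) \<Rightarrow> ('i \<Rightarrow> 'k) \<Rightarrow> ('i \<Rightarrow> int \<times> int \<Rightarrow> 'w) \<Rightarrow> bool" where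
  "conv_vanishes I h hb a \<longleftrightarrow> (\<forall>n. (\<Sum>i\<in>I. pow_conv (h i) (hb i) (a i) n) = 0)"

lemma conv_vanishes_shift_op:
  assumes "\<forall>i\<in>I. finite (supp (a i))" "conv_vanishes I h hb a"
  shows "conv_vanishes I h hb (\<lambda>i. shift_op P Q (h i) (a i))"
  unfolding conv_vanishes_def
proof
  fix n :: "int \<times> int"
  have "(\<Sum>i\<in>I. pow_conv (h i) (hb i) (shift_op P Q (h i) (a i)) n) =
      sc (of_int (fst n) + P) (\<Sum>i\<in>I. pow_conv (h i) (hb i) (a i) n)
    + sc (Q - of_int (fst n)) (\<Sum>i\<in>I. pow_conv (h i) (hb i) (a i) (fst n - 1, snd n))"
    using assms(1) by (simp add: pow_conv_shift_op sum.distrib scale_sum_right)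
  also have "\<dots> = 0"
  proof -
    have "\<And>n. (\<Sum>i\<in>I. pow_conv (h i) (hb i) (a i) n) = 0"
      using assms(2) unfolding conv_vanishes_def by blast
    then show ?thesis by simp
  qed
  finally show "(\<Sum>i\<in>I. pow_conv (h i) (hb i) (shift_op P Q (h i) (a i)) n) = 0" .
qed

lemma conv_vanishes_insert_zero:
  assumes "finite I" "r \<notin> I" "a r = (\<lambda>m. 0)" "conv_vanishes (insert r I) h hb a"
  shows "conv_vanishes I h hb a"
  using assms(4) unfolding conv_vanishes_def by (simp add: assms(1-3))

lemma finite_supp_shift_op:
  assumes "finite (supp a)"
  shows "finite (supp (shift_op P Q h a))"
proof -
  have "supp (shift_op P Q h a) \<subseteq> supp a \<union> (\<lambda>m. (fst m + 1, snd m)) ` supp a"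
    by (auto simp: supp_def shift_op_def image_iff) (metis diff_add_cancel)
  then show ?thesis using assms finite_subset by blast
qed

text \<open>At the top row \<open>t\<close> of the support only the second term of \<open>shift_op\<close> at row \<open>t + 1\<close> survives.\<close>
lemma shift_op_eq_0_imp:
  assumes fin: "finite (supp a)" and zero: "shift_op P Q h a = (\<lambda>m. 0)"
    and coeff: "\<And>t. t \<in> fst ` supp a \<Longrightarrow> Q - h - of_int t - 1 \<noteq> 0"
  shows "a = (\<lambda>m. 0)"
proof (rule ccontr)
  assume "a \<noteq> (\<lambda>m. 0)"
  then have ne: "supp a \<noteq> {}" by (simp add: supp_eq_empty_iff)
  define t where "t = Max (fst ` supp a)"
  have t_in: "t \<in> fst ` supp a" unfolding t_def using fin ne by (intro Max_in) auto
  then obtain m where m: "m \<in> supp a" "m = (t, snd m)" by (metis imageE prod.collapse)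
  have "a (t + 1, snd m) = 0"
  proof (rule ccontr)
    assume "a (t + 1, snd m) \<noteq> 0"
    then have "t + 1 \<in> fst ` supp a" by (force simp: supp_def)
    then have "t + 1 \<le> t" unfolding t_def using fin by (intro Max_ge) auto
    then show False by simp
  qed
  then have "shift_op P Q h a (t + 1, snd m) = sc (Q - h - of_int t - 1) (a m)"
    using m(2) by (simp add: shift_op_def algebra_simps)
  also have "\<dots> \<noteq> 0" using coeff[OF t_in] m(1) by (simp add: supp_def)
  finally show False using zero by simp
qed

lemma width_shift_op_less:
  assumes fin: "finite (supp a)" and ne: "supp a \<noteq> {}"
  defines "lo \<equiv> Min (fst ` supp a)" and "hi \<equiv> Max (fst ` supp a)"
  shows "width (shift_op (- of_int lo) (h + of_int hi + 1) h a) < width a"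
proof -
  have bounds: "a m \<noteq> 0 \<Longrightarrow> lo \<le> fst m \<and> fst m \<le> hi" for m
    unfolding lo_def hi_def using fin by (auto simp: supp_def intro!: Min_le Max_ge)
  have "lo \<le> hi" using ne bounds by (force simp: supp_def)
  have outside: "fst m < lo \<or> hi < fst m \<Longrightarrow> a m = 0" for m
    using bounds by fastforce
  have vanish: "shift_op (- of_int lo) (h + of_int hi + 1) h a m = 0"
    if "fst m \<le> lo \<or> hi + 1 \<le> fst m" for m
  proof -
    have "sc (of_int (fst m - lo)) (a m) = 0"
      using that outside[of m] by (cases "fst m = lo") auto
    moreover have "sc (of_int (hi + 1 - fst m)) (a (fst m - 1, snd m)) = 0"
      using that outside[of "(fst m - 1, snd m)"] by (cases "fst m = hi + 1") auto
    ultimately show ?thesis by (simp add: shift_op_def algebra_simps)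
  qed
  have "supp (shift_op (- of_int lo) (h + of_int hi + 1) h a) \<subseteq> {m. lo + 1 \<le> fst m \<and> fst m \<le> hi}"
  proof
    fix m assume "m \<in> supp (shift_op (- of_int lo) (h + of_int hi + 1) h a)"
    then have "\<not> (fst m \<le> lo \<or> hi + 1 \<le> fst m)" using vanish[of m] by (auto simp: supp_def)
    then show "m \<in> {m. lo + 1 \<le> fst m \<and> fst m \<le> hi}" by simp
  qed
  then have "width (shift_op (- of_int lo) (h + of_int hi + 1) h a) \<le> nat (hi - (lo + 1) + 1)"
    using width_le finite_supp_shift_op[OF fin] by blast
  also have "\<dots> < width a"
    using ne \<open>lo \<le> hi\<close> by (simp add: width_def lo_def hi_def)
  finally show ?thesis .
qed

lemma conv_vanishes_elim_fst:
  assumes "finite I" "r \<notin> I" "\<forall>i\<in>insert r I. finite (supp (a i))" "conv_vanishes (insert r I) h hb a"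
  shows "\<exists>a'. (\<forall>i\<in>I. finite (supp (a' i))) \<and> conv_vanishes I h hb a' \<and>
      (\<forall>i\<in>I. h i - h r \<notin> \<int> \<longrightarrow> a' i = (\<lambda>m. 0) \<longrightarrow> a i = (\<lambda>m. 0))"
  using assms(3,4)
proof (induction "width (a r)" arbitrary: a rule: less_induct)
  case less
  show ?case
  proof (cases "a r = (\<lambda>m. 0)")
    case True
    then show ?thesis
      using conv_vanishes_insert_zero[OF assms(1,2)] less.prems by blast
  next
    case False
    define lo where "lo = Min (fst ` supp (a r))"
    define hi where "hi = Max (fst ` supp (a r))"
    define a1 where "a1 = (\<lambda>i. shift_op (- of_int lo) (h r + of_int hi + 1) (h i) (a i))"
    have fin1: "\<forall>i\<in>insert r I. finite (supp (a1 i))"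
      using less.prems(1) finite_supp_shift_op by (simp add: a1_def)
    have "width (a1 r) < width (a r)"
      unfolding a1_def lo_def hi_def
      using False less.prems(1) by (intro width_shift_op_less) (auto simp: supp_eq_empty_iff)
    moreover have "conv_vanishes (insert r I) h hb a1"
      unfolding a1_def using less.prems by (rule conv_vanishes_shift_op)
    ultimately obtain a' where a': "\<forall>i\<in>I. finite (supp (a' i))" "conv_vanishes I h hb a'"
        "\<forall>i\<in>I. h i - h r \<notin> \<int> \<longrightarrow> a' i = (\<lambda>m. 0) \<longrightarrow> a1 i = (\<lambda>m. 0)"
      using less.hyps fin1 by blast
    have "a i = (\<lambda>m. 0)" if i: "i \<in> I" "h i - h r \<notin> \<int>" "a1 i = (\<lambda>m. 0)" for i
    proof (rule shift_op_eq_0_imp)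
      show "finite (supp (a i))" using i(1) less.prems(1) by blast
      show "shift_op (- of_int lo) (h r + of_int hi + 1) (h i) (a i) = (\<lambda>m. 0)"
        using i(3) by (simp add: a1_def)
      fix t
      have "h r + of_int hi + 1 - h i - of_int t - 1 = - (h i - h r - of_int (hi - t))" by simp
      also have "\<dots> \<noteq> 0" using i(2) by (metis Ints_of_int eq_iff_diff_eq_0 neg_equal_0_iff_equal)
      finally show "h r + of_int hi + 1 - h i - of_int t - 1 \<noteq> 0" .
    qed
    then show ?thesis using a' by blast
  qed
qed

lemma conv_vanishes_swap:
  "conv_vanishes I hb h (\<lambda>i. a i \<circ> prod.swap) \<longleftrightarrow> conv_vanishes I h hb a"
proof -
  have "pow_conv y x (b \<circ> prod.swap) n = pow_conv x y b (prod.swap n)" for x y b n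
    unfolding pow_conv_def
    by (rule Sum_any.reindex_cong[OF bij_swap]) (auto simp: mult.commute)
  moreover have "(\<forall>n. P (prod.swap n)) \<longleftrightarrow> (\<forall>n. P n)" for P :: "int \<times> int \<Rightarrow> bool"
    by (metis swap_swap)
  ultimately show ?thesis
    unfolding conv_vanishes_def by simp
qed

lemma finite_supp_swap: "finite (supp (a \<circ> prod.swap)) \<longleftrightarrow> finite (supp a)"
proof -
  have "supp (a \<circ> prod.swap) = prod.swap ` supp a"
    by (auto simp: supp_def image_iff)
  then show ?thesis by (simp add: finite_image_iff)
qed

lemma conv_vanishes_elim_snd:
  assumes "finite I" "r \<notin> I" "\<forall>i\<in>insert r I. finite (supp (a i))" "conv_vanishes (insert r I) h hb a"
  shows "\<exists>a'. (\<forall>i\<in>I. finite (supp (a' i))) \<and> conv_vanishes I h hb a' \<and>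
      (\<forall>i\<in>I. hb i - hb r \<notin> \<int> \<longrightarrow> a' i = (\<lambda>m. 0) \<longrightarrow> a i = (\<lambda>m. 0))"
proof -
  have swap_zero: "b \<circ> prod.swap = (\<lambda>m. 0) \<longleftrightarrow> b = (\<lambda>m. 0)" for b :: "int \<times> int \<Rightarrow> 'w"
    by (metis comp_apply comp_id swap_comp_swap)
  obtain a' where a': "\<forall>i\<in>I. finite (supp (a' i))" "conv_vanishes I hb h a'"
      "\<forall>i\<in>I. hb i - hb r \<notin> \<int> \<longrightarrow> a' i = (\<lambda>m. 0) \<longrightarrow> a i \<circ> prod.swap = (\<lambda>m. 0)"
    using conv_vanishes_elim_fst[of I r "\<lambda>i. a i \<circ> prod.swap" hb h] assms
    by (auto simp: finite_supp_swap conv_vanishes_swap)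
  have "conv_vanishes I h hb (\<lambda>i. a' i \<circ> prod.swap)"
    using a'(2) conv_vanishes_swap[of I h hb a'] by simp
  with a' show ?thesis
    by (intro exI[of _ "\<lambda>i. a' i \<circ> prod.swap"]) (auto simp: finite_supp_swap swap_zero)
qed

text \<open>The coefficient of the lexicographically smallest point of the support survives the
  convolution, since both signed binomial sequences start with \<open>1\<close>.\<close>
lemma pow_conv_eq_0_imp:
  assumes fin: "finite (supp a)" and zero: "\<And>n. pow_conv h hb a n = 0"
  shows "a = (\<lambda>m. 0)"
proof (rule ccontr)
  assume "a \<noteq> (\<lambda>m. 0)"
  then have ne: "supp a \<noteq> {}" by (simp add: supp_eq_empty_iff)
  define lo1 where "lo1 = Min (fst ` supp a)"
  define S1 where "S1 = {m \<in> supp a. fst m = lo1}"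
  define lo2 where "lo2 = Min (snd ` S1)"
  have lo1_le: "m \<in> supp a \<Longrightarrow> lo1 \<le> fst m" for m
    unfolding lo1_def using fin by (intro Min_le) auto
  have "lo1 \<in> fst ` supp a" unfolding lo1_def using fin ne by (intro Min_in) auto
  then have "S1 \<noteq> {}" by (auto simp: S1_def)
  moreover have fin_S1: "finite S1" using fin by (auto simp: S1_def)
  ultimately have "lo2 \<in> snd ` S1" unfolding lo2_def by (intro Min_in) auto
  then have lo_in: "(lo1, lo2) \<in> supp a" by (auto simp: S1_def)
  have lo2_le: "m \<in> S1 \<Longrightarrow> lo2 \<le> snd m" for m
    unfolding lo2_def using fin_S1 by (intro Min_le) auto
  have others: "sc (signed_gchoose h (lo1 - fst m) * signed_gchoose hb (lo2 - snd m)) (a m) = 0"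
    if "m \<noteq> (lo1, lo2)" for m
  proof (cases "m \<in> supp a")
    case True
    then have "lo1 < fst m \<or> (fst m = lo1 \<and> lo2 < snd m)"
      using lo1_le[of m] lo2_le[of m] that by (cases m) (auto simp: S1_def)
    then show ?thesis by (auto simp: signed_gchoose_def)
  qed (simp add: supp_def)
  have "pow_conv h hb a (lo1, lo2)
      = (\<Sum>m\<in>{(lo1, lo2)}. sc (signed_gchoose h (lo1 - fst m) * signed_gchoose hb (lo2 - snd m)) (a m))"
    unfolding pow_conv_def fst_conv snd_conv by (rule Sum_any.expand_superset) (use others in auto)
  also have "\<dots> = a (lo1, lo2)" by (simp add: signed_gchoose_def)
  finally show False using zero lo_in by (simp add: supp_def)
qed

lemma conv_vanishes_imp_zero:
  assumes "finite I" "\<forall>i\<in>I. finite (supp (a i))" "conv_vanishes I h hb a"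
    "\<forall>i\<in>I. \<forall>j\<in>I. i \<noteq> j \<longrightarrow> \<not> (h i - h j \<in> \<int> \<and> hb i - hb j \<in> \<int>)"
  shows "\<forall>i\<in>I. a i = (\<lambda>m. 0)"
  using assms
proof (induction I arbitrary: a rule: finite_induct)
  case (insert r I)
  have IH: "\<forall>i\<in>I. a' i = (\<lambda>m. 0)"
    if "\<forall>i\<in>I. finite (supp (a' i))" "conv_vanishes I h hb a'" for a'
    using insert.IH[OF that] insert.prems(3) by blast
  have others: "\<forall>i\<in>I. a i = (\<lambda>m. 0)"
  proof -
    obtain a' where a': "\<forall>i\<in>I. finite (supp (a' i))" "conv_vanishes I h hb a'"
        "\<forall>i\<in>I. h i - h r \<notin> \<int> \<longrightarrow> a' i = (\<lambda>m. 0) \<longrightarrow> a i = (\<lambda>m. 0)"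
      using conv_vanishes_elim_fst[OF insert.hyps insert.prems(1,2)] by blast
    obtain a'' where a'': "\<forall>i\<in>I. finite (supp (a'' i))" "conv_vanishes I h hb a''"
        "\<forall>i\<in>I. hb i - hb r \<notin> \<int> \<longrightarrow> a'' i = (\<lambda>m. 0) \<longrightarrow> a i = (\<lambda>m. 0)"
      using conv_vanishes_elim_snd[OF insert.hyps insert.prems(1,2)] by blast
    show ?thesis
    proof
      fix i assume "i \<in> I"
      then have "\<not> (h i - h r \<in> \<int> \<and> hb i - hb r \<in> \<int>)"
        using insert.prems(3) insert.hyps(2) by (metis insertCI)
      then show "a i = (\<lambda>m. 0)"
        using \<open>i \<in> I\<close> a'(3) IH[OF a'(1,2)] a''(3) IH[OF a''(1,2)] by blast
    qed
  qed
  have "pow_conv (h r) (hb r) (a r) n = 0" for n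
  proof -
    have "(\<Sum>i\<in>I. pow_conv (h i) (hb i) (a i) n) = 0" using others by (simp add: sum.neutral)
    moreover have "(\<Sum>i\<in>insert r I. pow_conv (h i) (hb i) (a i) n) = 0"
      using insert.prems(2) unfolding conv_vanishes_def by blast
    ultimately show ?thesis using insert.hyps by simp
  qed
  then have "a r = (\<lambda>m. 0)" using pow_conv_eq_0_imp insert.prems(1) by blast
  with others show ?case by blast
qed simp

lemma pow_conv_embed:
  "pow_conv h 0 (\<lambda>m. if snd m = 0 then f (fst m) else 0) n =
     (if snd n = 0 then Sum_any (\<lambda>k. sc (signed_gchoose h (fst n - k)) (f k)) else 0)"
proof -
  have "pow_conv h 0 (\<lambda>m. if snd m = 0 then f (fst m) else 0) n
      = Sum_any ((\<lambda>m. sc (signed_gchoose h (fst n - fst m) * signed_gchoose 0 (snd n - snd m))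
                        (if snd m = 0 then f (fst m) else 0)) \<circ> (\<lambda>k. (k, 0)))"
    unfolding pow_conv_def
  proof (rule Sum_any_reindex_inj[symmetric])
    show "inj (\<lambda>k::int. (k, 0::int))" by (simp add: inj_def)
    fix y :: "int \<times> int" assume "y \<notin> range (\<lambda>k. (k, 0))"
    then have "snd y \<noteq> 0" by (metis prod.collapse rangeI)
    then show "sc (signed_gchoose h (fst n - fst y) * signed_gchoose 0 (snd n - snd y))
                 (if snd y = 0 then f (fst y) else 0) = 0" by simp
  qed
  then show ?thesis by (simp add: signed_gchoose_0_left)
qed

lemma mult_zw_pow_slice:
  "mult_zw_pow sc h c (D - of_int n, B + of_int n) =
     Sum_any (\<lambda>k. sc (signed_gchoose h (n - k)) (c (D - h - of_int k, B + of_int k)))"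
proof -
  define G where "G j = sc (signed_gchoose h j) (c (D - h - of_int (n - j), B + of_int (n - j)))" for j
  have "mult_zw_pow sc h c (D - of_int n, B + of_int n) = Sum_any (G \<circ> int)"
    unfolding mult_zw_pow_def G_def by (rule Sum_any.cong) (simp add: signed_gchoose_of_nat algebra_simps)
  also have "\<dots> = Sum_any G"
    by (rule Sum_any_reindex_inj) (auto simp: G_def signed_gchoose_def range_int_iff)
  also have "\<dots> = Sum_any (\<lambda>k. sc (signed_gchoose h (n - k)) (c (D - h - of_int k, B + of_int k)))"
    by (rule Sum_any.reindex_cong[where l="\<lambda>k. n - k"])
      (auto simp: G_def intro!: o_bij[where g="\<lambda>k. n - k"])
  finally show ?thesis .
qed

lemma field_mult_pow_slice:
  "field_mult_pow sc hh c v ((D1 - of_int (fst n), D2 - of_int (snd n)), (B1 + of_int (fst n), B2 + of_int (snd n)))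
    = pow_conv (fst hh) (snd hh)
        (\<lambda>m. c ((D1 - fst hh - of_int (fst m), D2 - snd hh - of_int (snd m)),
                 (B1 + of_int (fst m), B2 + of_int (snd m))) v) n"
proof -
  define a where "a m = c ((D1 - fst hh - of_int (fst m), D2 - snd hh - of_int (snd m)),
                           (B1 + of_int (fst m), B2 + of_int (snd m))) v" for m :: "int \<times> int"
  define G where "G j = sc (signed_gchoose (fst hh) (fst j) * signed_gchoose (snd hh) (snd j))
                          (a (fst n - fst j, snd n - snd j))" for j :: "int \<times> int"
  have "field_mult_pow sc hh c v ((D1 - of_int (fst n), D2 - of_int (snd n)), (B1 + of_int (fst n), B2 + of_int (snd n)))
      = Sum_any (G \<circ> map_prod int int)"
    unfolding field_mult_pow_def
    by (rule Sum_any.cong) (auto simp: G_def a_def signed_gchoose_of_nat power_add algebra_simps)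
  also have "\<dots> = Sum_any G"
  proof (rule Sum_any_reindex_inj)
    show "inj (map_prod int int)" by (auto simp: inj_def)
    fix y :: "int \<times> int" assume "y \<notin> range (map_prod int int)"
    have "fst y < 0 \<or> snd y < 0"
    proof (rule ccontr)
      assume "\<not> (fst y < 0 \<or> snd y < 0)"
      then have "y = map_prod int int (nat (fst y), nat (snd y))" by (cases y) simp
      with \<open>y \<notin> range (map_prod int int)\<close> show False by blast
    qed
    then show "G y = 0" by (auto simp: G_def signed_gchoose_def)
  qed
  also have "\<dots> = pow_conv (fst hh) (snd hh) a n"
    unfolding pow_conv_def
    by (rule Sum_any.reindex_cong[where l="\<lambda>m. (fst n - fst m, snd n - snd m)"])
      (auto simp: G_def intro!: o_bij[where g="\<lambda>m. (fst n - fst m, snd n - snd m)"])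
  finally show ?thesis unfolding a_def .
qed

text \<open>Part (i) is the case hbar = 0 of the two-variable argument, with the slice of c_i
  placed on the row m2 = 0.\<close>
lemma mult_zw_pow_sum_eq_0_imp:
  assumes "finite I" "\<forall>i\<in>I. vertex_series2 (c i)" "\<forall>i\<in>I. \<forall>j\<in>I. i \<noteq> j \<longrightarrow> h i - h j \<notin> \<int>"
    and sum_zero: "(\<lambda>e. \<Sum>i\<in>I. mult_zw_pow sc (h i) (c i) e) = (\<lambda>e. 0)"
  shows "\<forall>i\<in>I. c i = (\<lambda>e. 0)"
proof (intro ballI ext)
  fix i0 and e :: "'k \<times> 'k" assume "i0 \<in> I"
  define D where "D = fst e + h i0"
  define a where "a j = (\<lambda>m::int \<times> int.
      if snd m = 0 then c j (D - h j - of_int (fst m), snd e + of_int (fst m)) else 0)" for j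
  have "finite (supp (a j))" if "j \<in> I" for j
  proof -
    have "supp (a j) \<subseteq> (\<lambda>k. (k, 0)) ` {k. c j (D - h j - of_int k, snd e + of_int k) \<noteq> 0}"
      by (auto simp: supp_def a_def image_iff split: if_splits)
    then show ?thesis
      using vertex_series2_slice_finite assms(2) that finite_subset by blast
  qed
  moreover have "conv_vanishes I h (\<lambda>_. 0) a"
    unfolding conv_vanishes_def
  proof
    fix n :: "int \<times> int"
    have "pow_conv (h j) 0 (a j) n =
        (if snd n = 0 then mult_zw_pow sc (h j) (c j) (D - of_int (fst n), snd e + of_int (fst n)) else 0)"
      for j unfolding a_def mult_zw_pow_slice by (rule pow_conv_embed)
    then show "(\<Sum>j\<in>I. pow_conv (h j) 0 (a j) n) = 0"
      using fun_cong[OF sum_zero, of "(D - of_int (fst n), snd e + of_int (fst n))"] by (cases "snd n = 0") simp_all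
  qed
  ultimately have "\<forall>j\<in>I. a j = (\<lambda>m. 0)"
    using conv_vanishes_imp_zero assms(1,3) by blast
  then have "a i0 (0, 0) = 0" using \<open>i0 \<in> I\<close> by simp
  then show "c i0 e = 0" by (simp add: a_def D_def)
qed

lemma field_mult_pow_sum_eq_0_imp:
  assumes "finite I" "\<forall>i\<in>I. is_field sc (c i)"
    "\<forall>i\<in>I. \<forall>j\<in>I. i \<noteq> j \<longrightarrow> \<not> (fst (h i) - fst (h j) \<in> \<int> \<and> snd (h i) - snd (h j) \<in> \<int>)"
    and sum_zero: "\<forall>v. (\<lambda>e. \<Sum>i\<in>I. field_mult_pow sc (h i) (c i) v e) = (\<lambda>e. 0)"
  shows "\<forall>i\<in>I. c i = (\<lambda>e v. 0)"
proof (intro ballI ext)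
  fix i0 and e :: "'k exp4" and v assume "i0 \<in> I"
  define D1 where "D1 = fst (fst e) + fst (h i0)"
  define D2 where "D2 = snd (fst e) + snd (h i0)"
  define a where "a j m = c j ((D1 - fst (h j) - of_int (fst m), D2 - snd (h j) - of_int (snd m)),
                               (fst (snd e) + of_int (fst m), snd (snd e) + of_int (snd m))) v" for j m
  have "finite (supp (a j))" if "j \<in> I" for j
    using vertex_series4_slice_finite assms(2) that
    unfolding a_def supp_def is_field_def by blast
  moreover have "conv_vanishes I (\<lambda>j. fst (h j)) (\<lambda>j. snd (h j)) a"
    unfolding conv_vanishes_def a_def field_mult_pow_slice[symmetric]
    using sum_zero by (simp add: fun_eq_iff)
  ultimately have "\<forall>j\<in>I. a j = (\<lambda>m. 0)"
    using conv_vanishes_imp_zero assms(1,3) by blast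
  then have "a i0 (0, 0) = 0" using \<open>i0 \<in> I\<close> by simp
  then show "c i0 e v = 0" by (simp add: a_def D1_def D2_def)
qed

end

theorem mainTheorem8:
  fixes scaleW :: "'k::field_char_0 \<Rightarrow> 'w::ab_group_add \<Rightarrow> 'w"
    and scaleV :: "'k \<Rightarrow> 'v::ab_group_add \<Rightarrow> 'v"
  assumes "vector_space scaleW" and "vector_space scaleV"
  shows "(\<forall>(r::nat) (c::nat \<Rightarrow> 'k \<times> 'k \<Rightarrow> 'w) (h::nat \<Rightarrow> 'k).
            (\<forall>i\<in>{1..r}. vertex_series2 (c i)) \<longrightarrow>
            (\<forall>i\<in>{1..r}. \<forall>j\<in>{1..r}. i \<noteq> j \<longrightarrow> h i - h j \<notin> \<int>) \<longrightarrow>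
            (\<lambda>e. \<Sum>i\<in>{1..r}. mult_zw_pow scaleW (h i) (c i) e) = (\<lambda>e. 0) \<longrightarrow>
            (\<forall>i\<in>{1..r}. c i = (\<lambda>e. 0)))
       \<and> (\<forall>(r::nat) (c::nat \<Rightarrow> 'k exp4 \<Rightarrow> 'v \<Rightarrow> 'v) (h::nat \<Rightarrow> 'k \<times> 'k).
            (\<forall>i\<in>{1..r}. is_field scaleV (c i)) \<longrightarrow>
            (\<forall>i\<in>{1..r}. \<forall>j\<in>{1..r}. i \<noteq> j \<longrightarrow>
                \<not> (fst (h i) - fst (h j) \<in> \<int> \<and> snd (h i) - snd (h j) \<in> \<int>)) \<longrightarrow>
            (\<forall>v. (\<lambda>e. \<Sum>i\<in>{1..r}. field_mult_pow scaleV (h i) (c i) v e) = (\<lambda>e. 0)) \<longrightarrow>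
            (\<forall>i\<in>{1..r}. c i = (\<lambda>e v. 0)))"
proof (intro conjI allI impI)
  fix r :: nat and c :: "nat \<Rightarrow> 'k \<times> 'k \<Rightarrow> 'w" and h :: "nat \<Rightarrow> 'k"
  assume "\<forall>i\<in>{1..r}. vertex_series2 (c i)" "\<forall>i\<in>{1..r}. \<forall>j\<in>{1..r}. i \<noteq> j \<longrightarrow> h i - h j \<notin> \<int>"
    "(\<lambda>e. \<Sum>i\<in>{1..r}. mult_zw_pow scaleW (h i) (c i) e) = (\<lambda>e. 0)"
  then show "\<forall>i\<in>{1..r}. c i = (\<lambda>e. 0)"
    by (rule mult_zw_pow_sum_eq_0_imp[OF assms(1) finite_atLeastAtMost])
next
  fix r :: nat and c :: "nat \<Rightarrow> 'k exp4 \<Rightarrow> 'v \<Rightarrow> 'v" and h :: "nat \<Rightarrow> 'k \<times> 'k"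
  assume "\<forall>i\<in>{1..r}. is_field scaleV (c i)"
    "\<forall>i\<in>{1..r}. \<forall>j\<in>{1..r}. i \<noteq> j \<longrightarrow> \<not> (fst (h i) - fst (h j) \<in> \<int> \<and> snd (h i) - snd (h j) \<in> \<int>)"
    "\<forall>v. (\<lambda>e. \<Sum>i\<in>{1..r}. field_mult_pow scaleV (h i) (c i) v e) = (\<lambda>e. 0)"
  then show "\<forall>i\<in>{1..r}. c i = (\<lambda>e v. 0)"
    by (rule field_mult_pow_sum_eq_0_imp[OF assms(2) finite_atLeastAtMost])
qed

end
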